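(* Let $K$ be a field, let $A$ be a finitely generated $K$-algebra that is a (right and left) Goldie domain, with quotient division algebra $Q(A)$, and let $E$ be a division subalgebra of $Q(A)$. If $Q(A)$ is infinite dimensional as a right $E$-vector space, then $AE$ is infinite dimensional as a right $E$-vector space.
   Context: $AE$ denotes the right $E$-subspace of $Q(A)$ consisting of finite sums $\sum a_ie_i$ with $a_i\in A$, $e_i\in E$. A Goldie domain has a classical (Ore) quotient division algebra $Q(A)$, in which every finite set of elements has a common left denominator from $A$. *)

theory Defs
  imports Main
begin

text \<open>Everything lives inside a division ring D (a type of class division_ring),
which plays the role of Q(A). Subsets of D model K, A and E.\<close>

definition subring :: "'a::ring_1 set \<Rightarrow> bool" where
  "subring B \<longleftrightarrow> 0 \<in> B \<and> 1 \<in> B \<and> (\<forall>x\<in>B. \<forall>y\<in>B. x + y \<in> B \<and> x * y \<in> B) \<and> (\<forall>x\<in>B. - x \<in> B)"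

definition division_subring :: "'a::division_ring set \<Rightarrow> bool" where
  "division_subring E \<longleftrightarrow> subring E \<and> (\<forall>x\<in>E. inverse x \<in> E)"

text \<open>K is a (commutative) subfield lying in the centre of D; this is how the
structure map of the K-algebra A (and of Q(A)) is modelled.\<close>
definition central_subfield :: "'a::division_ring set \<Rightarrow> bool" where
  "central_subfield K \<longleftrightarrow> division_subring K \<and> (\<forall>k\<in>K. \<forall>x. k * x = x * k)"

definition gen_algebra :: "'a::ring_1 set \<Rightarrow> 'a set \<Rightarrow> 'a set" where
  "gen_algebra K S = \<Inter>{B. subring B \<and> K \<subseteq> B \<and> S \<subseteq> B}"

definition finitely_generated_algebra :: "'a::ring_1 set \<Rightarrow> 'a set \<Rightarrow> bool" where
  "finitely_generated_algebra K A \<longleftrightarrow> (\<exists>S. finite S \<and> A = gen_algebra K S)"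

definition right_ideal :: "'a::ring_1 set \<Rightarrow> 'a set \<Rightarrow> bool" where
  "right_ideal A I \<longleftrightarrow> I \<subseteq> A \<and> 0 \<in> I \<and> (\<forall>x\<in>I. \<forall>y\<in>I. x + y \<in> I) \<and> (\<forall>x\<in>I. - x \<in> I)
     \<and> (\<forall>x\<in>I. \<forall>a\<in>A. x * a \<in> I)"

definition left_ideal :: "'a::ring_1 set \<Rightarrow> 'a set \<Rightarrow> bool" where
  "left_ideal A I \<longleftrightarrow> I \<subseteq> A \<and> 0 \<in> I \<and> (\<forall>x\<in>I. \<forall>y\<in>I. x + y \<in> I) \<and> (\<forall>x\<in>I. - x \<in> I)
     \<and> (\<forall>x\<in>I. \<forall>a\<in>A. a * x \<in> I)"

definition right_annihilator :: "'a::ring_1 set \<Rightarrow> 'a set \<Rightarrow> 'a set" where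
  "right_annihilator A X = {a\<in>A. \<forall>x\<in>X. x * a = 0}"

definition left_annihilator :: "'a::ring_1 set \<Rightarrow> 'a set \<Rightarrow> 'a set" where
  "left_annihilator A X = {a\<in>A. \<forall>x\<in>X. a * x = 0}"

definition independent_family :: "(nat \<Rightarrow> 'a::ring_1 set) \<Rightarrow> bool" where
  "independent_family I \<longleftrightarrow>
     (\<forall>n x. (\<forall>i<n. x i \<in> I i) \<and> (\<Sum>i<n. x i) = 0 \<longrightarrow> (\<forall>i<n. x i = 0))"

text \<open>Right Goldie: ACC on right annihilators and finite right uniform dimension
(no infinite direct sum of nonzero right ideals). Similarly on the left.\<close>
definition right_goldie :: "'a::ring_1 set \<Rightarrow> bool" where
  "right_goldie A \<longleftrightarrow>
     \<not> (\<exists>X :: nat \<Rightarrow> 'a set. (\<forall>n. X n \<subseteq> A) \<and>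
           (\<forall>n. right_annihilator A (X n) \<subset> right_annihilator A (X (Suc n)))) \<and>
     \<not> (\<exists>I :: nat \<Rightarrow> 'a set. (\<forall>n. right_ideal A (I n) \<and> I n \<noteq> {0}) \<and> independent_family I)"

definition left_goldie :: "'a::ring_1 set \<Rightarrow> bool" where
  "left_goldie A \<longleftrightarrow>
     \<not> (\<exists>X :: nat \<Rightarrow> 'a set. (\<forall>n. X n \<subseteq> A) \<and>
           (\<forall>n. left_annihilator A (X n) \<subset> left_annihilator A (X (Suc n)))) \<and>
     \<not> (\<exists>I :: nat \<Rightarrow> 'a set. (\<forall>n. left_ideal A (I n) \<and> I n \<noteq> {0}) \<and> independent_family I)"

text \<open>A subring of a division ring is automatically a domain.\<close>
definition classical_quotient_ring_of :: "'a::division_ring set \<Rightarrow> bool" where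
  "classical_quotient_ring_of A \<longleftrightarrow>
     (\<forall>q. \<exists>a\<in>A. \<exists>b\<in>A. b \<noteq> 0 \<and> q = a * inverse b) \<and>
     (\<forall>q. \<exists>a\<in>A. \<exists>b\<in>A. b \<noteq> 0 \<and> q = inverse b * a)"

definition right_span :: "'a::ring_1 set \<Rightarrow> 'a set \<Rightarrow> 'a set" where
  "right_span E S = {(\<Sum>x\<in>F. x * c x) | F c. finite F \<and> F \<subseteq> S \<and> c ` F \<subseteq> E}"

definition right_fin_dim :: "'a::ring_1 set \<Rightarrow> 'a set \<Rightarrow> bool" where
  "right_fin_dim E V \<longleftrightarrow> (\<exists>F. finite F \<and> F \<subseteq> V \<and> V \<subseteq> right_span E F)"

end

theory Submission
  imports Defs
begin

text \<open>Write q = b^-1 a with a, b \<in> A. If AE is finite dimensional, the elements b^i a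
  (all lying in A) satisfy a nontrivial right E-linear relation. Cancelling the lowest power
  of b occurring in it gives a c + b w = 0 with c \<in> E nonzero and w \<in> AE, so q = - w c^-1 \<in> AE.
  Hence AE = Q(A), which is infinite dimensional. Only the left fractions of Q(A) are needed;
  neither the Goldie conditions nor finite generation play a role.\<close>

lemma subring_closed:
  assumes "subring B"
  shows subring_zero: "0 \<in> B" and subring_one: "1 \<in> B"
    and subring_add: "x \<in> B \<Longrightarrow> y \<in> B \<Longrightarrow> x + y \<in> B"
    and subring_mult: "x \<in> B \<Longrightarrow> y \<in> B \<Longrightarrow> x * y \<in> B"
    and subring_uminus: "x \<in> B \<Longrightarrow> - x \<in> B"
  using assms unfolding subring_def by auto

lemma subring_power: "subring B \<Longrightarrow> b \<in> B \<Longrightarrow> b ^ i \<in> B"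
  by (induction i) (auto intro: subring_one subring_mult)

lemma subring_sum:
  assumes "subring B" "\<And>i. i \<in> I \<Longrightarrow> g i \<in> B"
  shows "sum g I \<in> B"
  using assms(2)
  by (induction I rule: infinite_finite_induct)
    (auto intro: subring_zero[OF assms(1)] subring_add[OF assms(1)])

lemma division_subring_inverse: "division_subring E \<Longrightarrow> x \<in> E \<Longrightarrow> inverse x \<in> E"
  unfolding division_subring_def by blast

lemma division_subring_subring: "division_subring E \<Longrightarrow> subring E"
  unfolding division_subring_def by blast

lemma sum_lessThan_add: "(\<Sum>k<m + n. g k) = (\<Sum>k<m. g k) + (\<Sum>i<n. g (m + i))"
  for g :: "nat \<Rightarrow> 'b::comm_monoid_add"
  by (induction n) (auto simp: add.assoc)

lemma right_spanI:
  assumes "finite F" "F \<subseteq> S" "c ` F \<subseteq> E"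
  shows "(\<Sum>x\<in>F. x * c x) \<in> right_span E S"
  unfolding right_span_def using assms by blast

lemma right_spanE:
  assumes "v \<in> right_span E S"
  obtains F c where "finite F" "F \<subseteq> S" "c ` F \<subseteq> E" "v = (\<Sum>x\<in>F. x * c x)"
  using assms unfolding right_span_def by blast

lemma right_span_zero: "0 \<in> right_span E S"
  using right_spanI[of "{}"] by simp

lemma right_span_empty: "right_span E {} = {0}"
  unfolding right_span_def by auto

lemma right_span_mono: "S \<subseteq> T \<Longrightarrow> right_span E S \<subseteq> right_span E T"
  unfolding right_span_def by blast

lemma right_span_superset:
  assumes "subring E" "x \<in> S"
  shows "x \<in> right_span E S"
  using right_spanI[of "{x}" S "\<lambda>_. 1" E] assms subring_one[OF assms(1)] by simp

lemma right_span_mult_right: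
  assumes "subring E" "v \<in> right_span E S" "e \<in> E"
  shows "v * e \<in> right_span E S"
proof -
  obtain F c where F: "finite F" "F \<subseteq> S" "c ` F \<subseteq> E" "v = (\<Sum>x\<in>F. x * c x)"
    using assms(2) by (rule right_spanE)
  have "v * e = (\<Sum>x\<in>F. x * (c x * e))"
    unfolding F(4) sum_distrib_right by (simp add: mult.assoc)
  moreover have "(\<lambda>x. c x * e) ` F \<subseteq> E"
    using F(3) assms(1,3) by (auto intro: subring_mult)
  ultimately show ?thesis
    using right_spanI[OF F(1,2)] by metis
qed

lemma right_span_add:
  assumes "subring E" "u \<in> right_span E S" "v \<in> right_span E S"
  shows "u + v \<in> right_span E S"
proof -
  obtain F1 c1 where F1: "finite F1" "F1 \<subseteq> S" "c1 ` F1 \<subseteq> E" "u = (\<Sum>x\<in>F1. x * c1 x)"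
    using assms(2) by (rule right_spanE)
  obtain F2 c2 where F2: "finite F2" "F2 \<subseteq> S" "c2 ` F2 \<subseteq> E" "v = (\<Sum>x\<in>F2. x * c2 x)"
    using assms(3) by (rule right_spanE)
  define c where "c x = (if x \<in> F1 then c1 x else 0) + (if x \<in> F2 then c2 x else 0)" for x
  have fin: "finite (F1 \<union> F2)"
    using F1(1) F2(1) by blast
  have "(\<Sum>x\<in>F1 \<union> F2. x * c x)
      = (\<Sum>x\<in>F1 \<union> F2. if x \<in> F1 then x * c1 x else 0)
        + (\<Sum>x\<in>F1 \<union> F2. if x \<in> F2 then x * c2 x else 0)"
    unfolding sum.distrib[symmetric] by (rule sum.cong) (auto simp: c_def distrib_left)
  also have "\<dots> = u + v"
    using sum.inter_restrict[OF fin, of "\<lambda>x. x * c1 x" F1]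
      sum.inter_restrict[OF fin, of "\<lambda>x. x * c2 x" F2]
    by (simp add: F1(4) F2(4) Int_absorb1)
  finally have "u + v = (\<Sum>x\<in>F1 \<union> F2. x * c x)" ..
  moreover have "c ` (F1 \<union> F2) \<subseteq> E"
    using F1(3) F2(3) subring_add[OF assms(1)] subring_zero[OF assms(1)] by (auto simp: c_def image_subset_iff)
  ultimately show ?thesis
    using right_spanI[OF fin] F1(2) F2(2) by (metis Un_least)
qed

lemma right_span_diff:
  assumes "subring E" "u \<in> right_span E S" "v \<in> right_span E S"
  shows "u - v \<in> right_span E S"
proof -
  have "v * (- 1) \<in> right_span E S"
    using assms(1,3) by (intro right_span_mult_right subring_uminus subring_one)
  then show ?thesis
    using right_span_add[OF assms(1,2)] by fastforce
qed

lemma right_span_sum: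
  assumes "subring E" "\<And>i. i \<in> I \<Longrightarrow> g i \<in> right_span E S"
  shows "sum g I \<in> right_span E S"
  using assms(2)
  by (induction I rule: infinite_finite_induct) (auto simp: right_span_zero right_span_add[OF assms(1)])

lemma right_span_insertE:
  assumes "subring E" "v \<in> right_span E (insert f F)"
  obtains w d where "w \<in> right_span E F" "d \<in> E" "v = w + f * d"
proof -
  obtain G c where G: "finite G" "G \<subseteq> insert f F" "c ` G \<subseteq> E" "v = (\<Sum>x\<in>G. x * c x)"
    using assms(2) by (rule right_spanE)
  show ?thesis
  proof (cases "f \<in> G")
    case True
    have "v = (\<Sum>x\<in>G - {f}. x * c x) + f * c f"
      using G(1,4) True by (simp add: sum.remove add.commute)
    moreover have "(\<Sum>x\<in>G - {f}. x * c x) \<in> right_span E F"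
      using G by (intro right_spanI) auto
    ultimately show ?thesis
      using that True G(3) by blast
  next
    case False
    then have "v \<in> right_span E F"
      using G by (metis right_spanI subset_insert)
    then show ?thesis
      using that[of v 0] subring_zero[OF assms(1)] by simp
  qed
qed

definition right_dependent :: "'a::ring_1 set \<Rightarrow> (nat \<Rightarrow> 'a) \<Rightarrow> bool" where
  "right_dependent E v \<longleftrightarrow>
     (\<exists>n c. (\<forall>i. c i \<in> E) \<and> (\<exists>i<n. c i \<noteq> 0) \<and> (\<Sum>i<n. v i * c i) = 0)"

lemma right_dependentI:
  "(\<And>i. c i \<in> E) \<Longrightarrow> i < n \<Longrightarrow> c i \<noteq> 0 \<Longrightarrow> (\<Sum>i<n. v i * c i) = 0 \<Longrightarrow> right_dependent E v"
  unfolding right_dependent_def by blast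

lemma right_dependent_shift:
  assumes "subring E" "right_dependent E (\<lambda>i. v (j + i))"
  shows "right_dependent E v"
proof -
  obtain c k n where c: "\<And>i. c i \<in> E" "k < n" "c k \<noteq> 0" "(\<Sum>i<n. v (j + i) * c i) = 0"
    using assms(2) unfolding right_dependent_def by blast
  define C where "C k = (if k < j then 0 else c (k - j))" for k
  have "(\<Sum>k<j + n. v k * C k) = (\<Sum>i<n. v (j + i) * c i)"
    by (simp add: sum_lessThan_add C_def)
  then show ?thesis
    using c assms(1) subring_zero
    by (intro right_dependentI[of C E "j + k" "j + n"]) (auto simp: C_def)
qed

text \<open>One step of Gaussian elimination with pivot v 0.\<close>
lemma right_dependent_eliminate:
  assumes "subring E" "\<And>i. e i \<in> E" "right_dependent E (\<lambda>i. v (Suc i) - v 0 * e i)"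
  shows "right_dependent E v"
proof -
  obtain c k n where c: "\<And>i. c i \<in> E" "k < n" "c k \<noteq> 0"
      "(\<Sum>i<n. (v (Suc i) - v 0 * e i) * c i) = 0"
    using assms(3) unfolding right_dependent_def by blast
  define S where "S = (\<Sum>i<n. e i * c i)"
  define C where "C k = (case k of 0 \<Rightarrow> - S | Suc i \<Rightarrow> c i)" for k
  have "S \<in> E"
    unfolding S_def using assms(1,2) c(1) by (intro subring_sum) (auto intro: subring_mult)
  have "(\<Sum>k<Suc n. v k * C k) = (\<Sum>i<n. v (Suc i) * c i) - v 0 * S"
    unfolding sum.lessThan_Suc_shift by (simp add: C_def)
  also have "\<dots> = (\<Sum>i<n. (v (Suc i) - v 0 * e i) * c i)"
    by (simp add: S_def sum_distrib_left sum_subtractf left_diff_distrib mult.assoc)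
  finally show ?thesis
    using c \<open>S \<in> E\<close> assms(1)
    by (intro right_dependentI[of C E "Suc k" "Suc n"])
      (auto simp: C_def intro: subring_uminus split: nat.split)
qed

lemma right_dependent_if_in_finite_span:
  assumes E: "division_subring E" and "finite F" and "\<And>i. v i \<in> right_span E F"
  shows "right_dependent E v"
  using assms(2,3)
proof (induction F arbitrary: v rule: finite_induct)
  case empty
  then have "v 0 = 0"
    by (simp add: right_span_empty)
  then show ?case
    using subring_one[OF division_subring_subring[OF E]]
    by (intro right_dependentI[of "\<lambda>_. 1" E 0 1]) simp_all
next
  case (insert f F)
  have sE: "subring E"
    using E by (rule division_subring_subring)
  have "\<forall>i. \<exists>w d. w \<in> right_span E F \<and> d \<in> E \<and> v i = w + f * d"
    using right_span_insertE[OF sE insert.prems] by metis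
  then obtain w d where wd: "\<And>i. w i \<in> right_span E F" "\<And>i. d i \<in> E" "\<And>i. v i = w i + f * d i"
    by metis
  show ?case
  proof (cases "\<forall>i. d i = 0")
    case True
    then show ?thesis
      using insert.IH wd by simp
  next
    case False
    then obtain j where j: "d j \<noteq> 0" by blast
    define e where "e i = inverse (d j) * d (j + Suc i)" for i
    have eE: "e i \<in> E" for i
      unfolding e_def using wd(2) E by (intro subring_mult[OF sE] division_subring_inverse)
    have "v (j + Suc i) - v j * e i = w (j + Suc i) - w j * e i" for i
    proof -
      have "d j * e i = d (j + Suc i)"
        unfolding e_def using j by (simp add: mult.assoc[symmetric])
      then show ?thesis
        unfolding wd(3) by (simp add: algebra_simps mult.assoc)
    qed
    moreover have "w (j + Suc i) - w j * e i \<in> right_span E F" for i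
      using wd(1) eE by (intro right_span_diff[OF sE] right_span_mult_right[OF sE])
    ultimately have "right_dependent E (\<lambda>i. v (j + Suc i) - v (j + 0) * e i)"
      by (intro insert.IH) simp
    then have "right_dependent E (\<lambda>i. v (j + i))"
      using right_dependent_eliminate[OF sE eE, of "\<lambda>i. v (j + i)"] by simp
    then show ?thesis
      by (rule right_dependent_shift[OF sE])
  qed
qed

text \<open>Induction on the length of the relation: a vanishing lowest coefficient can be
  cancelled against a factor b on the left.\<close>
lemma inverse_mult_in_right_span_if_dependent_powers:
  fixes a b :: "'a::division_ring"
  assumes E: "division_subring E" and b: "b \<noteq> 0" and dep: "right_dependent E (\<lambda>i. b ^ i * a)"
  shows "inverse b * a \<in> right_span E (range (\<lambda>i. b ^ i * a))"
proof -
  let ?P = "range (\<lambda>i. b ^ i * a)"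
  have sE: "subring E"
    using E by (rule division_subring_subring)
  have "inverse b * a \<in> right_span E ?P"
    if "\<forall>i. c i \<in> E" "\<exists>i<n. c i \<noteq> 0" "(\<Sum>i<n. b ^ i * a * c i) = 0" for n c
    using that
  proof (induction n arbitrary: c)
    case 0
    then show ?case by simp
  next
    case (Suc n)
    define w where "w = (\<Sum>i<n. b ^ i * a * c (Suc i))"
    have w_span: "w \<in> right_span E ?P"
      unfolding w_def using Suc.prems(1)
      by (intro right_span_sum[OF sE] right_span_mult_right[OF sE] right_span_superset[OF sE]) auto
    have rel: "a * c 0 + b * w = 0"
      using Suc.prems(3) unfolding w_def sum.lessThan_Suc_shift
      by (simp add: sum_distrib_left mult.assoc)
    show ?case
    proof (cases "c 0 = 0")
      case True
      with rel b have "(\<Sum>i<n. b ^ i * a * c (Suc i)) = 0"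
        unfolding w_def by simp
      moreover have "\<exists>i<n. c (Suc i) \<noteq> 0"
        using Suc.prems(2) True by (metis less_Suc_eq_0_disj)
      ultimately show ?thesis
        using Suc.IH[of "\<lambda>i. c (Suc i)"] Suc.prems(1) by blast
    next
      case False
      have "a * c 0 = - (b * w)"
        using rel by (simp add: eq_neg_iff_add_eq_0)
      then have "inverse b * a * c 0 = inverse b * (- (b * w))"
        by (simp add: mult.assoc)
      also have "\<dots> = - w"
        using b by (simp add: mult.assoc[symmetric])
      finally have "inverse b * a * c 0 * inverse (c 0) = w * (- inverse (c 0))"
        by simp
      then have "inverse b * a = w * (- inverse (c 0))"
        using False by (simp add: mult.assoc)
      moreover have "- inverse (c 0) \<in> E"
        using Suc.prems(1) E by (intro subring_uminus[OF sE] division_subring_inverse) auto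
      ultimately show ?thesis
        using right_span_mult_right[OF sE w_span] by metis
    qed
  qed
  then show ?thesis
    using dep unfolding right_dependent_def by blast
qed

lemma right_span_eq_UNIV_if_fin_dim:
  fixes A E :: "'a::division_ring set"
  assumes E: "division_subring E" and A: "subring A"
    and left_fractions: "\<forall>q. \<exists>a\<in>A. \<exists>b\<in>A. b \<noteq> 0 \<and> q = inverse b * a"
    and fin_dim: "right_fin_dim E (right_span E A)"
  shows "right_span E A = UNIV"
proof -
  have sE: "subring E"
    using E by (rule division_subring_subring)
  obtain F where F: "finite F" "right_span E A \<subseteq> right_span E F"
    using fin_dim unfolding right_fin_dim_def by blast
  have "q \<in> right_span E A" for q
  proof -
    obtain a b where ab: "a \<in> A" "b \<in> A" "b \<noteq> 0" "q = inverse b * a"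
      using left_fractions by blast
    have powers: "range (\<lambda>i. b ^ i * a) \<subseteq> A"
      using ab(1,2) subring_power[OF A] subring_mult[OF A] by blast
    then have "right_dependent E (\<lambda>i. b ^ i * a)"
      using F(2) right_span_superset[OF sE]
      by (intro right_dependent_if_in_finite_span[OF E F(1)]) blast
    then have "q \<in> right_span E (range (\<lambda>i. b ^ i * a))"
      unfolding ab(4) by (rule inverse_mult_in_right_span_if_dependent_powers[OF E ab(3)])
    then show ?thesis
      using right_span_mono[OF powers] by blast
  qed
  then show ?thesis
    by blast
qed

theorem mainTheorem5:
  fixes K A E :: "'a::division_ring set"
  assumes K: "central_subfield K"
    and A_sub: "subring A" and KA: "K \<subseteq> A"
    and A_fg: "finitely_generated_algebra K A"
    and A_goldie: "right_goldie A" "left_goldie A"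
    and Q: "classical_quotient_ring_of A"
    and E: "division_subring E" and KE: "K \<subseteq> E"
    and inf: "\<not> right_fin_dim E (UNIV :: 'a set)"
  shows "\<not> right_fin_dim E (right_span E A)"
proof
  assume fin_dim: "right_fin_dim E (right_span E A)"
  have "\<forall>q. \<exists>a\<in>A. \<exists>b\<in>A. b \<noteq> 0 \<and> q = inverse b * a"
    using Q unfolding classical_quotient_ring_of_def by blast
  then have "right_span E A = UNIV"
    using right_span_eq_UNIV_if_fin_dim[OF E A_sub _ fin_dim] by blast
  then show False
    using fin_dim inf by simp
qed

end
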